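(* Let $n\ge3$, $0<\epsilon<1$, and define $\alpha,\beta,\gamma,\delta$ and the polynomial $Q(\rho)$ as in the context. If $\epsilon>0$ is sufficiently small, then $Q(\rho)>0$ for all $\rho\in(\epsilon,1)$.
   Context: $D(\epsilon) = -n\epsilon^{n+2} + (n+2)\epsilon^{n+1} + n - (n+2)\epsilon$, $N(\epsilon) = -n\epsilon^{n+1} + (n+1)\epsilon^n - 1$, $K(\epsilon) = -1 + \frac{n+1}{n-1}\epsilon - \epsilon^{n-1} + \frac{n-3}{n-1}\epsilon^n$, $M(\epsilon) = \frac{\epsilon^{n+1}-1}{n(n+1)} + \frac{\epsilon-\epsilon^n}{n(n-1)}$; $\delta = \Big(\epsilon^{n-2}(1-\epsilon) - \frac{(n+2)N K}{D} + \frac{n(n-3)}{n-1}\epsilon^{n-1} - (n-1)\epsilon^{n-2} + \frac{n+1}{n-1}\Big)\Big(\frac{(n+2)N}{D}M + \frac{-(n-1)\epsilon^n + n\epsilon^{n-1}-1}{n(n-1)}\Big)^{-1}$, $\gamma = n(n+1)(n+2)(M\delta + K)/D$, $\alpha = -1 - \frac{\delta}{n(n+1)} - \frac{\gamma}{(n+1)(n+2)}$, $\beta = \frac{n+1}{n-1} + \frac{\delta}{n(n-1)} + \frac{\gamma}{n(n+1)}$ (denominators are nonzero for small $\epsilon$); $Q(\rho) = -\frac{\gamma}{(n+1)(n+2)}\rho^{n+2} - \frac{\delta-\gamma}{n(n+1)}\rho^{n+1} - \Big(1 - \frac{2n+\delta}{n(n-1)}\Big)\rho^n + \rho^{n-1}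 - \alpha - \beta\rho$. *)

theory Defs
  imports Complex_Main
begin

definition Dfun :: "nat \<Rightarrow> real \<Rightarrow> real" where
  "Dfun n e = - real n * e ^ (n+2) + real (n+2) * e ^ (n+1) + real n - real (n+2) * e"

definition Nfun :: "nat \<Rightarrow> real \<Rightarrow> real" where
  "Nfun n e = - real n * e ^ (n+1) + real (n+1) * e ^ n - 1"

definition Kfun :: "nat \<Rightarrow> real \<Rightarrow> real" where
  "Kfun n e = -1 + (real n + 1) / (real n - 1) * e - e ^ (n-1)
              + (real n - 3) / (real n - 1) * e ^ n"

definition Mfun :: "nat \<Rightarrow> real \<Rightarrow> real" where
  "Mfun n e = (e ^ (n+1) - 1) / (real n * (real n + 1)) + (e - e ^ n) / (real n * (real n - 1))"

definition delta :: "nat \<Rightarrow> real \<Rightarrow> real" where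
  "delta n e =
     (e ^ (n-2) * (1 - e) - (real n + 2) * Nfun n e * Kfun n e / Dfun n e
       + real n * (real n - 3) / (real n - 1) * e ^ (n-1)
       - (real n - 1) * e ^ (n-2) + (real n + 1) / (real n - 1))
     / ((real n + 2) * Nfun n e / Dfun n e * Mfun n e
       + (- (real n - 1) * e ^ n + real n * e ^ (n-1) - 1) / (real n * (real n - 1)))"

definition gamma :: "nat \<Rightarrow> real \<Rightarrow> real" where
  "gamma n e = real n * (real n + 1) * (real n + 2) * (Mfun n e * delta n e + Kfun n e) / Dfun n e"

definition alpha :: "nat \<Rightarrow> real \<Rightarrow> real" where
  "alpha n e = -1 - delta n e / (real n * (real n + 1)) - gamma n e / ((real n + 1) * (real n + 2))"

definition beta :: "nat \<Rightarrow> real \<Rightarrow> real" where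
  "beta n e = (real n + 1) / (real n - 1) + delta n e / (real n * (real n - 1))
              + gamma n e / (real n * (real n + 1))"

definition Qpoly :: "nat \<Rightarrow> real \<Rightarrow> real \<Rightarrow> real" where
  "Qpoly n e r =
     - gamma n e / ((real n + 1) * (real n + 2)) * r ^ (n+2)
     - (delta n e - gamma n e) / (real n * (real n + 1)) * r ^ (n+1)
     - (1 - (2 * real n + delta n e) / (real n * (real n - 1))) * r ^ n
     + r ^ (n-1) - alpha n e - beta n e * r"

end

theory Submission
  imports Defs
begin

text \<open>Regard \<open>\<delta>\<close>, \<open>\<gamma>\<close> in \<open>Q\<close> as free parameters \<open>d\<close>, \<open>g\<close>. The coefficients
  \<open>\<alpha>\<close>, \<open>\<beta>\<close> are what makes \<open>Q(1) = Q'(1) = 0\<close>, and \<open>\<delta>\<close>, \<open>\<gamma>\<close> solve the linear system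
  \<open>Q(\<epsilon>) = 0\<close>, \<open>Q'(\<epsilon>) = \<epsilon>^(n-2) (1 - \<epsilon>) > 0\<close>. Moreover \<open>Q'' = \<rho>^(n-3) C(\<rho>)\<close> with a
  cubic \<open>C\<close>. As \<open>\<epsilon> \<rightarrow> 0\<close>, \<open>\<delta> \<rightarrow> -n(n+1)\<close> and \<open>\<gamma> \<rightarrow> 0\<close>; at these limiting parameters
  \<open>Q = \<rho>^(n-1) (1 - \<rho>)^2\<close> and \<open>C\<close> is a quadratic which is at least 1 near 0 and near 1.
  Hence for small \<open>\<epsilon>\<close> the polynomial \<open>Q\<close> is convex near both ends of \<open>(\<epsilon>, 1)\<close>, where it
  lies above its tangents at \<open>\<epsilon>\<close> (positive slope) and at 1 (zero slope), while in between
  it is uniformly close to \<open>\<rho>^(n-1) (1 - \<rho>)^2\<close>, which is bounded away from 0 there.\<close>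

lemma DERIV2_pos_imp_above_tangent:
  fixes f f' f'' :: "real \<Rightarrow> real"
  assumes f': "\<And>z. a \<le> z \<Longrightarrow> z \<le> b \<Longrightarrow> (f has_real_derivative f' z) (at z)"
    and f'': "\<And>z. a \<le> z \<Longrightarrow> z \<le> b \<Longrightarrow> (f' has_real_derivative f'' z) (at z)"
    and pos: "\<And>z. a \<le> z \<Longrightarrow> z \<le> b \<Longrightarrow> f'' z > 0"
    and x: "a \<le> x" "x \<le> b" and y: "a \<le> y" "y \<le> b" and "x \<noteq> y"
  shows "f y > f x + f' x * (y - x)"
proof -
  have f'_mono: "f' u < f' v" if "a \<le> u" "u < v" "v \<le> b" for u v
  proof (rule DERIV_pos_imp_increasing[OF \<open>u < v\<close>])
    fix z assume "u \<le> z" "z \<le> v"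
    then have "a \<le> z" "z \<le> b" using that by linarith+
    then show "\<exists>l. (f' has_real_derivative l) (at z) \<and> l > 0" using f'' pos by blast
  qed
  have mvt: "\<exists>z. u < z \<and> z < v \<and> f v - f u = (v - u) * f' z"
    if "a \<le> u" "u < v" "v \<le> b" for u v
    using that by (intro MVT2 f') linarith+
  show ?thesis
  proof (cases "x < y")
    case True
    then obtain z where z: "x < z" "z < y" "f y - f x = (y - x) * f' z"
      using mvt x y by blast
    have "(y - x) * f' x < (y - x) * f' z"
      using f'_mono[of x z] x y z True by simp
    then show ?thesis using z by (simp add: algebra_simps)
  next
    case False
    then have "y < x" using \<open>x \<noteq> y\<close> by simp
    then obtain z where z: "y < z" "z < x" "f x - f y = (x - y) * f' z"
      using mvt x y by blast
    have "(x - y) * f' z < (x - y) * f' x"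
      using f'_mono[of z x] x y z \<open>y < x\<close> by simp
    then show ?thesis using z by (simp add: algebra_simps)
  qed
qed

lemma abs_power_divide_le_1:
  fixes r q :: real
  assumes "0 \<le> r" "r \<le> 1" "1 \<le> q"
  shows "\<bar>r ^ k / q\<bar> \<le> 1"
proof -
  have "r ^ k \<le> 1" using assms by (simp add: power_le_one)
  then show ?thesis using assms by (simp add: abs_le_iff divide_le_eq)
qed

definition alpha_of :: "nat \<Rightarrow> real \<Rightarrow> real \<Rightarrow> real" where
  "alpha_of n d g = -1 - d / (real n * (real n + 1)) - g / ((real n + 1) * (real n + 2))"

definition beta_of :: "nat \<Rightarrow> real \<Rightarrow> real \<Rightarrow> real" where
  "beta_of n d g = (real n + 1) / (real n - 1) + d / (real n * (real n - 1))
     + g / (real n * (real n + 1))"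

definition Qfam :: "nat \<Rightarrow> real \<Rightarrow> real \<Rightarrow> real \<Rightarrow> real" where
  "Qfam n d g r = - g / ((real n + 1) * (real n + 2)) * r ^ (n+2)
     - (d - g) / (real n * (real n + 1)) * r ^ (n+1)
     - (1 - (2 * real n + d) / (real n * (real n - 1))) * r ^ n
     + r ^ (n-1) - alpha_of n d g - beta_of n d g * r"

definition Qfam_deriv :: "nat \<Rightarrow> real \<Rightarrow> real \<Rightarrow> real \<Rightarrow> real" where
  "Qfam_deriv n d g r = - g / (real n + 1) * r ^ (n+1) - (d - g) / real n * r ^ n
     - real n * (1 - (2 * real n + d) / (real n * (real n - 1))) * r ^ (n-1)
     + (real n - 1) * r ^ (n-2) - beta_of n d g"

definition Qfam_curv :: "nat \<Rightarrow> real \<Rightarrow> real \<Rightarrow> real \<Rightarrow> real" where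
  "Qfam_curv n d g r = - g * r^3 - (d - g) * r^2 - (real n ^ 2 - 3 * real n - d) * r
     + (real n - 1) * (real n - 2)"

definition delta_denom :: "nat \<Rightarrow> real \<Rightarrow> real" where
  "delta_denom n e = (real n + 2) * Nfun n e / Dfun n e * Mfun n e
     + (- (real n - 1) * e ^ n + real n * e ^ (n-1) - 1) / (real n * (real n - 1))"

lemma Qpoly_eq_Qfam: "Qpoly n e r = Qfam n (delta n e) (gamma n e) r"
  unfolding Qpoly_def Qfam_def alpha_of_def beta_of_def alpha_def beta_def ..

lemma Qfam_at_1:
  assumes "n \<ge> 3"
  shows "Qfam n d g 1 = 0" "Qfam_deriv n d g 1 = 0"
proof -
  have "real n \<noteq> 0" "real n - 1 \<noteq> 0" "real n + 1 \<noteq> 0" "real n + 2 \<noteq> 0"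
    using assms by auto
  then show "Qfam n d g 1 = 0" "Qfam_deriv n d g 1 = 0"
    unfolding Qfam_def Qfam_deriv_def alpha_of_def beta_of_def
    by (simp_all add: divide_simps, simp_all add: algebra_simps)
qed

lemma Qfam_has_derivative:
  assumes "n \<ge> 3"
  shows "(Qfam n d g has_real_derivative Qfam_deriv n d g r) (at r)"
proof -
  obtain m where m: "n = m + 3" using assms by (metis add.commute le_iff_add)
  have nz: "real m + 2 \<noteq> 0" "real m + 3 \<noteq> 0" "real m + 4 \<noteq> 0" "real m + 5 \<noteq> 0"
    by linarith+
  show ?thesis
    unfolding Qfam_def Qfam_deriv_def m
    apply (rule derivative_eq_intros refl)+
    using nz by (simp add: power_add divide_simps)
qed

lemma Qfam_deriv_has_derivative:
  assumes "n \<ge> 3"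
  shows "(Qfam_deriv n d g has_real_derivative r ^ (n-3) * Qfam_curv n d g r) (at r)"
proof -
  obtain m where m: "n = m + 3" using assms by (metis add.commute le_iff_add)
  have nz: "real m + 2 \<noteq> 0" "real m + 3 \<noteq> 0" "real m + 4 \<noteq> 0" by linarith+
  show ?thesis
    unfolding Qfam_deriv_def Qfam_curv_def m
    apply (rule derivative_eq_intros refl)+
    using nz by (simp add: power_add divide_simps)
      (simp add: algebra_simps power2_eq_square power3_eq_cube)
qed

lemma Qfam_at_eps:
  assumes "n \<ge> 3"
  shows "Qfam n d g e = - Kfun n e - Mfun n e * d + g * Dfun n e / (real n * (real n + 1) * (real n + 2))"
proof -
  obtain m where m: "n = m + 3" using assms by (metis add.commute le_iff_add)
  have nz: "real m + 2 \<noteq> 0" "real m + 3 \<noteq> 0" "real m + 4 \<noteq> 0" "real m + 5 \<noteq> 0"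
    by linarith+
  show ?thesis
    unfolding Qfam_def alpha_of_def beta_of_def Kfun_def Mfun_def Dfun_def m
    using nz by (simp add: power_add divide_simps) (simp add: algebra_simps)
qed

lemma Qfam_deriv_at_eps:
  assumes "n \<ge> 3"
  shows "Qfam_deriv n d g e =
    (real n - 1) * e ^ (n-2) - real n * (real n - 3) / (real n - 1) * e ^ (n-1)
    - (real n + 1) / (real n - 1)
    + (- (real n - 1) * e ^ n + real n * e ^ (n-1) - 1) / (real n * (real n - 1)) * d
    + Nfun n e / (real n * (real n + 1)) * g"
proof -
  obtain m where m: "n = m + 3" using assms by (metis add.commute le_iff_add)
  have nz: "real m + 2 \<noteq> 0" "real m + 3 \<noteq> 0" "real m + 4 \<noteq> 0" "real m + 5 \<noteq> 0"
    by linarith+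
  show ?thesis
    unfolding Qfam_deriv_def beta_of_def Nfun_def m
    using nz by (simp add: power_add divide_simps) (simp add: algebra_simps)
qed

lemma Qfam_delta_gamma_at_eps:
  assumes "n \<ge> 3" and "Dfun n e \<noteq> 0"
  shows "Qfam n (delta n e) (gamma n e) e = 0"
proof -
  have "real n * (real n + 1) * (real n + 2) \<noteq> 0" using assms(1) by simp
  then have "gamma n e * Dfun n e / (real n * (real n + 1) * (real n + 2))
      = Mfun n e * delta n e + Kfun n e"
    unfolding gamma_def using assms(2) by simp
  then show ?thesis unfolding Qfam_at_eps[OF assms(1)] by simp
qed

lemma Qfam_deriv_delta_gamma_at_eps:
  assumes "n \<ge> 3" and D: "Dfun n e \<noteq> 0" and den: "delta_denom n e \<noteq> 0"
  shows "Qfam_deriv n (delta n e) (gamma n e) e = e ^ (n-2) * (1 - e)"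
proof -
  define P where "P = (real n + 2) * Nfun n e * Kfun n e / Dfun n e"
  define A where "A = (real n + 2) * Nfun n e / Dfun n e * Mfun n e"
  define E0 where "E0 = (real n - 1) * e ^ (n-2) - real n * (real n - 3) / (real n - 1) * e ^ (n-1)
    - (real n + 1) / (real n - 1)"
  define E1 where "E1 = (- (real n - 1) * e ^ n + real n * e ^ (n-1) - 1) / (real n * (real n - 1))"
  have "real n * (real n + 1) \<noteq> 0" using assms(1) by simp
  then have "Nfun n e / (real n * (real n + 1)) * gamma n e
      = Nfun n e * ((real n + 2) * (Mfun n e * delta n e + Kfun n e) / Dfun n e)"
    unfolding gamma_def by simp
  also have "\<dots> = P + delta n e * A"
    unfolding P_def A_def using D by (simp add: field_simps)
  finally have "Qfam_deriv n (delta n e) (gamma n e) e = E0 + P + delta n e * (A + E1)"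
    unfolding Qfam_deriv_at_eps[OF assms(1)] E0_def[symmetric] E1_def[symmetric]
    by (simp add: algebra_simps)
  moreover have "delta n e = (e ^ (n-2) * (1 - e) - P - E0) / (A + E1)"
    unfolding delta_def P_def[symmetric] A_def[symmetric] E1_def[symmetric] E0_def
    by (rule arg_cong[where f = "\<lambda>x. x / _"]) linarith
  moreover have "A + E1 \<noteq> 0" using den unfolding delta_denom_def A_def E1_def .
  ultimately show ?thesis by simp
qed

lemma parameters_at_0:
  assumes "n \<ge> 3"
  shows "Dfun n 0 = real n" "delta_denom n 0 = -2 / (real n ^ 2 * (real n + 1) * (real n - 1))"
    "delta n 0 = - (real n * (real n + 1))" "gamma n 0 = 0"
proof -
  have nz: "real n \<noteq> 0" "real n - 1 \<noteq> 0" "real n + 1 \<noteq> 0" "real n + 2 \<noteq> 0"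
    using assms by auto
  have N: "Nfun n 0 = -1" and K: "Kfun n 0 = -1" and M: "Mfun n 0 = -1 / (real n * (real n + 1))"
    unfolding Nfun_def Kfun_def Mfun_def using assms by (simp_all add: power_0_left)
  show D: "Dfun n 0 = real n" unfolding Dfun_def by simp
  show den: "delta_denom n 0 = -2 / (real n ^ 2 * (real n + 1) * (real n - 1))"
    unfolding delta_denom_def D N M using assms nz
    by (simp add: divide_simps power_0_left) (simp add: algebra_simps power2_eq_square)
  have "delta n 0 = ((real n + 1) / (real n - 1) - (real n + 2) / real n) / delta_denom n 0"
    unfolding delta_def delta_denom_def D N K using assms by (simp add: power_0_left)
  also have "\<dots> = - (real n * (real n + 1))"
    unfolding den using nz by (simp add: divide_simps) (simp add: algebra_simps power2_eq_square)
  finally show delta: "delta n 0 = - (real n * (real n + 1))" .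
  show "gamma n 0 = 0" unfolding gamma_def delta M K using nz by (simp add: divide_simps)
qed

lemma isCont_parameters_at_0:
  assumes "n \<ge> 3"
  shows "isCont (Dfun n) 0" "isCont (delta_denom n) 0" "isCont (delta n) 0" "isCont (gamma n) 0"
proof -
  note val = parameters_at_0[OF assms]
  have nz: "real n \<noteq> 0" "real n - 1 \<noteq> 0" "real n + 1 \<noteq> 0" using assms by auto
  have D0: "Dfun n 0 \<noteq> 0" and den0: "delta_denom n 0 \<noteq> 0" using val nz by simp_all
  show D: "isCont (Dfun n) 0" unfolding Dfun_def[abs_def] by (intro continuous_intros)
  have N: "isCont (Nfun n) 0" and K: "isCont (Kfun n) 0" and M: "isCont (Mfun n) 0"
    unfolding Nfun_def[abs_def] Kfun_def[abs_def] Mfun_def[abs_def] using nz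
    by (auto intro!: continuous_intros)
  show den: "isCont (delta_denom n) 0"
    unfolding delta_denom_def[abs_def] using D0 nz by (intro continuous_intros D N M) auto
  show delta: "isCont (delta n) 0"
    unfolding delta_def[abs_def] delta_denom_def[symmetric] using D0 den0 nz
    by (intro continuous_intros D N K den) auto
  show "isCont (gamma n) 0"
    unfolding gamma_def[abs_def] using D0 nz by (intro continuous_intros D M K delta) auto
qed

definition limit_dist :: "nat \<Rightarrow> real \<Rightarrow> real \<Rightarrow> real" where
  "limit_dist n d g = \<bar>d + real n * (real n + 1)\<bar> + \<bar>g\<bar>"

lemma Qfam_approx:
  assumes "n \<ge> 3" "0 \<le> r" "r \<le> 1"
  shows "\<bar>Qfam n d g r - r ^ (n-1) * (1 - r)^2\<bar> \<le> 4 * limit_dist n d g"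
proof -
  define d' where "d' = d + real n * (real n + 1)"
  define cd where "cd = r ^ n / (real n * (real n - 1)) - r ^ (n+1) / (real n * (real n + 1))
    + r ^ 0 / (real n * (real n + 1)) - r ^ 1 / (real n * (real n - 1))"
  define cg where "cg = r ^ (n+1) / (real n * (real n + 1)) - r ^ (n+2) / ((real n + 1) * (real n + 2))
    + r ^ 0 / ((real n + 1) * (real n + 2)) - r ^ 1 / (real n * (real n + 1))"
  have eq: "Qfam n d g r - r ^ (n-1) * (1 - r)^2 = d' * cd + g * cg"
  proof -
    obtain m where m: "n = m + 3" using assms by (metis add.commute le_iff_add)
    have nz: "real m + 2 \<noteq> 0" "real m + 3 \<noteq> 0" "real m + 4 \<noteq> 0" "real m + 5 \<noteq> 0"
      by linarith+
    show ?thesis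
      unfolding Qfam_def alpha_of_def beta_of_def d'_def cd_def cg_def m
      using nz by (simp add: power_add eval_nat_numeral divide_simps) (simp add: algebra_simps)
  qed
  have q: "1 \<le> real n * (real n + 1)" "1 \<le> real n * (real n - 1)" "1 \<le> (real n + 1) * (real n + 2)"
    using assms(1) mult_mono[of 1 "real n" 1 "real n + 1"] mult_mono[of 1 "real n" 1 "real n - 1"]
      mult_mono[of 1 "real n + 1" 1 "real n + 2"] by simp_all
  note t = abs_power_divide_le_1[OF assms(2,3)]
  have "\<bar>cd\<bar> \<le> 4"
    using t[OF q(1), of "n+1"] t[OF q(2), of n] t[OF q(1), of 0] t[OF q(2), of 1]
    unfolding cd_def abs_le_iff by linarith
  moreover have "\<bar>cg\<bar> \<le> 4"
    using t[OF q(3), of "n+2"] t[OF q(1), of "n+1"] t[OF q(3), of 0] t[OF q(1), of 1]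
    unfolding cg_def abs_le_iff by linarith
  ultimately have "\<bar>d' * cd\<bar> \<le> \<bar>d'\<bar> * 4" "\<bar>g * cg\<bar> \<le> \<bar>g\<bar> * 4"
    by (simp_all add: abs_mult mult_left_mono)
  then have "\<bar>d' * cd + g * cg\<bar> \<le> \<bar>d'\<bar> * 4 + \<bar>g\<bar> * 4"
    by (intro order_trans[OF abs_triangle_ineq add_mono])
  then show ?thesis unfolding eq limit_dist_def d'_def by simp
qed

lemma Qfam_curv_pos:
  assumes "n \<ge> 3" and small: "limit_dist n d g < 1"
    and "0 \<le> r" "r \<le> 1" and ends: "4 * real n * r \<le> real n - 2 \<or> 4 * real n * (1 - r) \<le> 1"
  shows "Qfam_curv n d g r > 0"
proof -
  define d' where "d' = d + real n * (real n + 1)"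
  define P where
    "P = real n * (real n + 1) * r^2 - 2 * real n * (real n - 1) * r + (real n - 1) * (real n - 2)"
  have eq: "Qfam_curv n d g r = P + d' * (r - r^2) + g * (r^2 - r^3)"
    unfolding Qfam_curv_def P_def d'_def by (simp add: algebra_simps power2_eq_square)
  have "r^2 \<le> r" "r^3 \<le> r^2"
    using assms(3,4) power_decreasing[of 1 2 r] power_decreasing[of 2 3 r] by simp_all
  moreover have "0 \<le> r^3" using assms(3) by simp
  ultimately have "\<bar>r - r^2\<bar> \<le> 1" "\<bar>r^2 - r^3\<bar> \<le> 1"
    using assms(4) unfolding abs_le_iff by linarith+
  then have "\<bar>d' * (r - r^2)\<bar> \<le> \<bar>d'\<bar>" "\<bar>g * (r^2 - r^3)\<bar> \<le> \<bar>g\<bar>"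
    unfolding abs_mult by (simp_all add: mult_left_le)
  then have err: "\<bar>d' * (r - r^2) + g * (r^2 - r^3)\<bar> < 1"
    using small abs_triangle_ineq[of "d' * (r - r^2)" "g * (r^2 - r^3)"]
    unfolding limit_dist_def d'_def[symmetric]
    by linarith
  have "P \<ge> 1"
    using ends
  proof
    assume low: "4 * real n * r \<le> real n - 2"
    have "2 * real n * (real n - 1) * r = (real n - 1) / 2 * (4 * real n * r)" by simp
    also have "\<dots> \<le> (real n - 1) / 2 * (real n - 2)"
      using low assms(1) by (intro mult_left_mono) auto
    finally have "2 * real n * (real n - 1) * r \<le> (real n - 1) / 2 * (real n - 2)" .
    moreover have "2 \<le> (real n - 1) * (real n - 2)"
      using assms(1) mult_mono[of 2 "real n - 1" 1 "real n - 2"] by simp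
    moreover have "0 \<le> real n * (real n + 1) * r^2" by simp
    ultimately show ?thesis unfolding P_def by linarith
  next
    assume high: "4 * real n * (1 - r) \<le> 1"
    have "P = 2 - 4 * real n * (1 - r) + real n * (real n + 1) * (1 - r)^2"
      unfolding P_def by (simp add: algebra_simps power2_eq_square)
    moreover have "0 \<le> real n * (real n + 1) * (1 - r)^2" by simp
    ultimately show ?thesis using high by linarith
  qed
  then show ?thesis unfolding eq using err by linarith
qed

text \<open>A quarter of the minimum of \<open>\<rho>^(n-1) (1 - \<rho>)^2\<close> on \<open>[(n-2)/(4n), 1 - 1/(4n)]\<close>;
  outside this interval the limiting curvature factor is at least 1.\<close>

definition Qfam_margin :: "nat \<Rightarrow> real" where
  "Qfam_margin n = ((real n - 2) / (4 * real n)) ^ (n-1) * (1 / (4 * real n))^2 / 4"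

lemma Qfam_margin_bounds:
  assumes "n \<ge> 3"
  shows "0 < Qfam_margin n" "Qfam_margin n < 1"
proof -
  define a where "a = (real n - 2) / (4 * real n)"
  define b where "b = 1 / (4 * real n)"
  have n: "3 \<le> real n" using assms by simp
  have a: "0 < a" "a \<le> 1" and b: "0 < b" "b \<le> 1"
    unfolding a_def b_def using n by (simp_all add: divide_le_eq)
  have m: "Qfam_margin n = a ^ (n-1) * b^2 / 4" unfolding Qfam_margin_def a_def b_def ..
  show "0 < Qfam_margin n" unfolding m using a b by simp
  have "a ^ (n-1) * b^2 \<le> 1"
    using a b by (intro mult_le_one power_le_one zero_le_power) auto
  then show "Qfam_margin n < 1" unfolding m by simp
qed

lemma Qfam_pos_middle:
  assumes "n \<ge> 3" "(real n - 2) / (4 * real n) \<le> r" "r \<le> 1 - 1 / (4 * real n)"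
    and small: "limit_dist n d g < Qfam_margin n"
  shows "Qfam n d g r > 0"
proof -
  have lo: "0 \<le> (real n - 2) / (4 * real n)" using assms(1) by simp
  have "1 / (4 * real n) \<le> 1 - r" using assms(3) by simp
  then have "4 * Qfam_margin n \<le> r ^ (n-1) * (1 - r)^2"
    unfolding Qfam_margin_def using assms(2) lo by (auto intro!: mult_mono power_mono)
  moreover have "0 \<le> 1 / (4 * real n)" by simp
  then have "0 \<le> r" "r \<le> 1" using assms(2,3) lo by linarith+
  note Qfam_approx[OF assms(1) this, of d g]
  ultimately show ?thesis using small by linarith
qed

lemma Qfam_pos:
  assumes "n \<ge> 3" "0 < e" "e < r" "r < 1"
    and zero: "Qfam n d g e = 0" and slope: "Qfam_deriv n d g e > 0"
    and small: "limit_dist n d g < Qfam_margin n"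
  shows "Qfam n d g r > 0"
proof -
  define a where "a = (real n - 2) / (4 * real n)"
  define b where "b = 1 - 1 / (4 * real n)"
  have curv_pos: "z ^ (n-3) * Qfam_curv n d g z > 0" if "0 < z" "z \<le> 1" "z \<le> a \<or> b \<le> z" for z
  proof -
    have "4 * real n * z \<le> real n - 2 \<or> 4 * real n * (1 - z) \<le> 1"
      using that(3) assms(1) unfolding a_def b_def by (auto simp: field_simps)
    then show ?thesis
      using Qfam_curv_pos[OF assms(1) _ less_imp_le[OF \<open>0 < z\<close>] \<open>z \<le> 1\<close>] small
        Qfam_margin_bounds[OF assms(1)] \<open>0 < z\<close> by simp
  qed
  note tangent = DERIV2_pos_imp_above_tangent[where f = "Qfam n d g" and f' = "Qfam_deriv n d g",
      OF Qfam_has_derivative[OF assms(1)] Qfam_deriv_has_derivative[OF assms(1)]]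
  consider "r \<le> a" | "a \<le> r" "r \<le> b" | "b \<le> r" by linarith
  then show ?thesis
  proof cases
    case 1
    have "a \<le> 1" unfolding a_def using assms(1) by simp
    then have "Qfam n d g r > Qfam n d g e + Qfam_deriv n d g e * (r - e)"
      using assms 1 by (intro tangent[of e a]) (auto intro!: curv_pos)
    moreover have "Qfam_deriv n d g e * (r - e) > 0" using slope assms(3) by simp
    ultimately show ?thesis using zero by simp
  next
    case 2
    then show ?thesis using Qfam_pos_middle[OF assms(1) _ _ small] unfolding a_def b_def by simp
  next
    case 3
    have "b > 0" using assms(1) unfolding b_def by simp
    then have "Qfam n d g r > Qfam n d g 1 + Qfam_deriv n d g 1 * (r - 1)"
      using assms 3 by (intro tangent[of b 1]) (auto intro!: curv_pos)
    then show ?thesis using Qfam_at_1[OF assms(1)] by simp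
  qed
qed

theorem lemma4p9:
  fixes n :: nat
  assumes "n \<ge> 3"
  shows "\<exists>e0>0. \<forall>e::real. 0 < e \<and> e < 1 \<and> e < e0 \<longrightarrow>
           (\<forall>r::real. e < r \<and> r < 1 \<longrightarrow> Qpoly n e r > 0)"
proof -
  note val = parameters_at_0[OF assms] and cont = isCont_parameters_at_0[OF assms]
  have "((\<lambda>e. limit_dist n (delta n e) (gamma n e))
      \<longlongrightarrow> limit_dist n (delta n 0) (gamma n 0)) (at 0)"
    using cont(3,4) unfolding isCont_def limit_dist_def by (intro tendsto_intros)
  then have "\<forall>\<^sub>F e in at 0. limit_dist n (delta n e) (gamma n e) < Qfam_margin n"
    using Qfam_margin_bounds(1)[OF assms] val by (intro order_tendstoD(2)) (auto simp: limit_dist_def)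
  moreover have "\<forall>\<^sub>F e in at 0. Dfun n e \<noteq> 0" "\<forall>\<^sub>F e in at 0. delta_denom n e \<noteq> 0"
    using cont(1,2) val assms unfolding isCont_def by (auto intro!: tendsto_imp_eventually_ne)
  ultimately have "\<forall>\<^sub>F e in at_right 0. Dfun n e \<noteq> 0 \<and> delta_denom n e \<noteq> 0
      \<and> limit_dist n (delta n e) (gamma n e) < Qfam_margin n"
    by (simp add: eventually_at_split eventually_conj_iff)
  then obtain e0 :: real where "e0 > 0" and good: "\<And>e. 0 < e \<Longrightarrow> e < e0 \<Longrightarrow>
      Dfun n e \<noteq> 0 \<and> delta_denom n e \<noteq> 0 \<and> limit_dist n (delta n e) (gamma n e) < Qfam_margin n"
    unfolding eventually_at_right_field by auto
  show ?thesis
  proof (intro exI[of _ e0] conjI allI impI \<open>e0 > 0\<close>)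
    fix e r :: real
    assume e: "0 < e \<and> e < 1 \<and> e < e0" and r: "e < r \<and> r < 1"
    then have "Dfun n e \<noteq> 0" "delta_denom n e \<noteq> 0"
      and small: "limit_dist n (delta n e) (gamma n e) < Qfam_margin n"
      using good by auto
    then have "Qfam n (delta n e) (gamma n e) e = 0"
      and "Qfam_deriv n (delta n e) (gamma n e) e > 0"
      using Qfam_delta_gamma_at_eps[OF assms] Qfam_deriv_delta_gamma_at_eps[OF assms] e by simp_all
    then show "Qpoly n e r > 0"
      unfolding Qpoly_eq_Qfam using Qfam_pos[OF assms _ _ _ _ _ small] e r by auto
  qed
qed

end
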